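(* Let $\mathcal L:\mathbb R^n\to(-\infty,\infty]$ be proper and lower semicontinuous. (i) Let $B\in\mathbb R^{r\times n}$, $b\in\mathbb R^r$, $\lambda\in\mathbb R^r$ with $\lambda>0$ componentwise, and $\Phi_\lambda\in\{\Phi_{0,\lambda},\Phi_{+,\lambda}\}$. If $\mathcal L$ is ALS, then $H(x):=\mathcal L(x)+\Phi_\lambda(Bx-b)$ is ALS. (ii) Suppose in addition that $\mathcal L$ is convex and ALS, that $C\subseteq\mathbb R^n$ is a polyhedral convex set, and that $\operatorname{dom}\mathcal L\cap C\neq\emptyset$. Then $U(x):=\mathcal L(x)+\delta(x\mid C)$ is ALS.
   Context: For $u\in\mathbb R^r$ and $\lambda\in\mathbb R^r$, $\lambda>0$: $\Phi_{0,\lambda}(u)=\sum_{i=1}^r\lambda_i\mathbf 1_{\{u_i\neq0\}}$ and $\Phi_{+,\lambda}(u)=\sum_{i=1}^r\lambda_i\mathbf 1_{\{u_i>0\}}$. $\delta(x\mid C)$ is $0$ if $x\in C$ and $+\infty$ otherwise. For a proper lsc $\psi:\mathbb R^n\to(-\infty,\infty]$, its asymptotic function is $\psi_\infty(d)=\liminf_{\tilde d\to d,\ t\to+\infty}\psi(t\tilde d)/t$ and $\operatorname{Ker}\psi_\infty=\{d:\psi_\infty(d)=0\}$; $\operatorname{lev}(\psi,\tau)=\{x:\psi(x)\le\tau\}$. $\psi$ is called asymptotically level stable (ALS) if for each $\rho>0$, each bounded sequence of reals $\{\tau_k\}$ and each sequence $\{x^k\}$ with $x^k\in\operatorname{lev}(\psi,\tau_k)$,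 $\|x^k\|\to\infty$, $x^k/\|x^k\|\to\bar x\in\operatorname{Ker}\psi_\infty$, there is $k_0$ with $x^k-\rho\bar x\in\operatorname{lev}(\psi,\tau_k)$ for all $k\ge k_0$. *)

theory Defs
  imports "HOL-Analysis.Analysis"
begin

text \<open>Extended-real-valued functions on R^n are modelled as functions into ereal.\<close>

definition proper_fun :: "('a \<Rightarrow> ereal) \<Rightarrow> bool" where
  "proper_fun f \<longleftrightarrow> (\<forall>x. f x \<noteq> -\<infinity>) \<and> (\<exists>x. f x \<noteq> \<infinity>)"

definition lsc_fun :: "('a::topological_space \<Rightarrow> ereal) \<Rightarrow> bool" where
  "lsc_fun f \<longleftrightarrow> (\<forall>x. f x \<le> Liminf (at x) f)"

definition dom_fun :: "('a \<Rightarrow> ereal) \<Rightarrow> 'a set" where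
  "dom_fun f = {x. f x < \<infinity>}"

definition convex_fun :: "('a::real_vector \<Rightarrow> ereal) \<Rightarrow> bool" where
  "convex_fun f \<longleftrightarrow> convex {(x, \<mu>::real). f x \<le> ereal \<mu>}"

definition Phi0 :: "real^'r \<Rightarrow> real^'r \<Rightarrow> real" where
  "Phi0 lam u = (\<Sum>i\<in>UNIV. lam $ i * (if u $ i \<noteq> 0 then 1 else 0))"

definition Phiplus :: "real^'r \<Rightarrow> real^'r \<Rightarrow> real" where
  "Phiplus lam u = (\<Sum>i\<in>UNIV. lam $ i * (if u $ i > 0 then 1 else 0))"

definition indicator_fun :: "'a set \<Rightarrow> 'a \<Rightarrow> ereal" where
  "indicator_fun C x = (if x \<in> C then 0 else \<infinity>)"

definition asymp_fun :: "('a::real_normed_vector \<Rightarrow> ereal) \<Rightarrow> 'a \<Rightarrow> ereal" where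
  "asymp_fun psi d = Liminf (nhds d \<times>\<^sub>F at_top) (\<lambda>(d', t::real). psi (t *\<^sub>R d') / ereal t)"

definition Ker_asymp :: "('a::real_normed_vector \<Rightarrow> ereal) \<Rightarrow> 'a set" where
  "Ker_asymp psi = {d. asymp_fun psi d = 0}"

definition lev :: "('a \<Rightarrow> ereal) \<Rightarrow> real \<Rightarrow> 'a set" where
  "lev psi \<tau> = {x. psi x \<le> ereal \<tau>}"

definition ALS :: "('a::real_normed_vector \<Rightarrow> ereal) \<Rightarrow> bool" where
  "ALS psi \<longleftrightarrow>
    (\<forall>\<rho>::real. \<forall>\<tau>::nat \<Rightarrow> real. \<forall>x::nat \<Rightarrow> 'a. \<forall>xbar.
       \<rho> > 0 \<and> bounded (range \<tau>) \<and> (\<forall>k. x k \<in> lev psi (\<tau> k))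
       \<and> filterlim (\<lambda>k. norm (x k)) at_top sequentially
       \<and> (\<lambda>k. x k /\<^sub>R norm (x k)) \<longlonglongrightarrow> xbar
       \<and> xbar \<in> Ker_asymp psi
       \<longrightarrow> (\<exists>k0. \<forall>k\<ge>k0. x k - \<rho> *\<^sub>R xbar \<in> lev psi (\<tau> k)))"

end

theory Submission
  imports Defs
begin

text \<open>
  (i) The penalty \<open>\<Phi>\<^sub>\<lambda>(Bx - b)\<close> is bounded, so adding it changes neither the asymptotic
  function nor the boundedness of the level parameters. Along a sequence with
  \<open>x\<^sup>k/\<parallel>x\<^sup>k\<parallel> \<rightarrow> d\<close>, every entry \<open>(Bx\<^sup>k - b)\<^sub>i\<close> with \<open>(Bd)\<^sub>i \<noteq> 0\<close> eventually has the
  sign of \<open>(Bd)\<^sub>i\<close> and dominates \<open>\<rho>(Bd)\<^sub>i\<close>, so retracting by \<open>\<rho>d\<close> can only switch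
  entries off and \<open>\<Phi>\<^sub>\<lambda>\<close> does not increase.

  (ii) Level sequences of \<open>U\<close> lie in \<open>C\<close>, hence \<open>d\<close> is a recession direction of the
  polyhedron \<open>C\<close> and \<open>x\<^sup>k - \<rho>d \<in> C\<close> eventually, one halfspace at a time. It remains to
  see \<open>Ker U\<^sub>\<infinity> \<subseteq> Ker L\<^sub>\<infinity>\<close>: \<open>L \<le> U\<close> gives \<open>L\<^sub>\<infinity>(d) \<le> 0\<close>, and if \<open>L\<^sub>\<infinity>(d) < \<mu> < 0\<close> then
  convexity and lower semicontinuity give \<open>L(x\<^sub>0 + sd) \<le> L(x\<^sub>0) + s\<mu>\<close> on the ray from
  some \<open>x\<^sub>0 \<in> dom L \<inter> C\<close>; the ray stays in \<open>C\<close>, which forces \<open>U\<^sub>\<infinity>(d) \<le> \<mu> < 0\<close>.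
\<close>

definition diverges_in_direction :: "(nat \<Rightarrow> 'a::real_normed_vector) \<Rightarrow> 'a \<Rightarrow> bool" where
  "diverges_in_direction x d \<longleftrightarrow>
     filterlim (\<lambda>k. norm (x k)) at_top sequentially \<and> (\<lambda>k. x k /\<^sub>R norm (x k)) \<longlonglongrightarrow> d"

lemma ALSI:
  assumes "\<And>\<rho> \<tau> x d. \<rho> > 0 \<Longrightarrow> bounded (range \<tau>) \<Longrightarrow> (\<And>k. psi (x k) \<le> ereal (\<tau> k)) \<Longrightarrow>
             diverges_in_direction x d \<Longrightarrow> asymp_fun psi d = 0 \<Longrightarrow>
             eventually (\<lambda>k. psi (x k - \<rho> *\<^sub>R d) \<le> ereal (\<tau> k)) sequentially"
  shows "ALS psi"
  unfolding ALS_def lev_def Ker_asymp_def mem_Collect_eq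
proof (intro allI impI, elim conjE)
  fix \<rho> :: real and \<tau> x d
  assume "\<rho> > 0" "bounded (range \<tau>)" "\<forall>k. psi (x k) \<le> ereal (\<tau> k)"
    "filterlim (\<lambda>k. norm (x k)) at_top sequentially" "(\<lambda>k. x k /\<^sub>R norm (x k)) \<longlonglongrightarrow> d"
    "asymp_fun psi d = 0"
  then have "eventually (\<lambda>k. psi (x k - \<rho> *\<^sub>R d) \<le> ereal (\<tau> k)) sequentially"
    by (intro assms) (auto simp: diverges_in_direction_def)
  then show "\<exists>k0. \<forall>k\<ge>k0. psi (x k - \<rho> *\<^sub>R d) \<le> ereal (\<tau> k)"
    unfolding eventually_sequentially .
qed

lemma ALSD:
  assumes "ALS psi" "\<rho> > 0" "bounded (range \<tau>)" "\<And>k. psi (x k) \<le> ereal (\<tau> k)"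
    "diverges_in_direction x d" "asymp_fun psi d = 0"
  shows "eventually (\<lambda>k. psi (x k - \<rho> *\<^sub>R d) \<le> ereal (\<tau> k)) sequentially"
  unfolding eventually_sequentially
  using assms(1)[unfolded ALS_def, rule_format, of \<rho> \<tau> x d] assms(2-)
  unfolding lev_def Ker_asymp_def diverges_in_direction_def by blast

lemma diverges_in_direction_linear_at_bot:
  fixes f :: "'a::real_normed_vector \<Rightarrow> real"
  assumes "bounded_linear f" "diverges_in_direction x d" "f d < 0"
  shows "filterlim (\<lambda>k. f (x k)) at_bot sequentially"
proof -
  have N: "filterlim (\<lambda>k. norm (x k)) at_top sequentially"
    and "(\<lambda>k. f (x k /\<^sub>R norm (x k))) \<longlonglongrightarrow> f d"
    using assms(2) bounded_linear.tendsto[OF assms(1)] by (auto simp: diverges_in_direction_def)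
  then have "filterlim (\<lambda>k. f (x k /\<^sub>R norm (x k)) * norm (x k)) at_bot sequentially"
    using filterlim_tendsto_neg_mult_at_bot assms(3) by blast
  moreover have "eventually (\<lambda>k. f (x k /\<^sub>R norm (x k)) * norm (x k) = f (x k)) sequentially"
    using filterlim_at_top_dense[THEN iffD1, OF N, rule_format, of 0]
    by eventually_elim (use assms(1) in \<open>simp add: linear_simps\<close>)
  ultimately show ?thesis
    by (rule filterlim_cong[THEN iffD1, rotated -1, OF _ refl refl])
qed

lemma diverges_in_direction_linear_at_top:
  fixes f :: "'a::real_normed_vector \<Rightarrow> real"
  assumes "bounded_linear f" "diverges_in_direction x d" "f d > 0"
  shows "filterlim (\<lambda>k. f (x k)) at_top sequentially"
proof -
  have "filterlim (\<lambda>k. - f (x k)) at_bot sequentially"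
    using assms by (intro diverges_in_direction_linear_at_bot bounded_linear_minus) auto
  then show ?thesis
    by (simp add: filterlim_uminus_at_bot)
qed

lemma diverges_in_direction_linear_le:
  fixes f :: "'a::real_normed_vector \<Rightarrow> real"
  assumes "bounded_linear f" "diverges_in_direction x d" "\<And>k. f (x k) \<le> \<beta>"
  shows "f d \<le> 0"
proof (rule ccontr)
  assume "\<not> f d \<le> 0"
  then have "filterlim (\<lambda>k. f (x k)) at_top sequentially"
    by (intro diverges_in_direction_linear_at_top[OF assms(1,2)]) simp
  then have "eventually (\<lambda>k. \<beta> < f (x k)) sequentially"
    unfolding filterlim_at_top_dense by blast
  then obtain k where "\<beta> < f (x k)"
    using eventually_sequentially by auto
  then show False
    using assms(3) leD by blast
qed

lemma diverges_in_direction_retract_sign: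
  fixes f :: "'a::real_normed_vector \<Rightarrow> real"
  assumes f: "bounded_linear f" and x: "diverges_in_direction x d" and \<rho>: "\<rho> > 0"
  shows "eventually (\<lambda>k. (f (x k - \<rho> *\<^sub>R d) \<noteq> c \<longrightarrow> f (x k) \<noteq> c)
                          \<and> (f (x k - \<rho> *\<^sub>R d) > c \<longrightarrow> f (x k) > c)) sequentially"
proof -
  have shift: "f (x k - \<rho> *\<^sub>R d) = f (x k) - \<rho> * f d" for k
    using f by (simp add: linear_simps)
  consider "f d > 0" | "f d < 0" | "f d = 0"
    by linarith
  then show ?thesis
  proof cases
    case 1
    then have "eventually (\<lambda>k. f (x k) > c) sequentially"
      using filterlim_at_top_dense[THEN iffD1, OF diverges_in_direction_linear_at_top[OF f x 1]] by blast
    then show ?thesis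
      by eventually_elim simp
  next
    case 2
    then have "\<rho> * f d < 0"
      using \<rho> by (simp add: mult_pos_neg)
    have "eventually (\<lambda>k. f (x k) < c + \<rho> * f d) sequentially"
      using filterlim_at_bot_dense[THEN iffD1, OF diverges_in_direction_linear_at_bot[OF f x 2]] by blast
    then show ?thesis
      by eventually_elim (use \<open>\<rho> * f d < 0\<close> in \<open>auto simp: shift\<close>)
  next
    case 3
    then show ?thesis
      by (simp add: shift)
  qed
qed

lemma Liminf_le_Liminf_filterlim:
  fixes f :: "'a \<Rightarrow> 'c::complete_linorder"
  assumes "filterlim h F G"
  shows "Liminf F f \<le> Liminf G (\<lambda>x. f (h x))"
proof -
  have "Liminf F f \<le> Liminf (filtermap h G) f"
    unfolding le_Liminf_iff
    using assms filter_leD less_LiminfD unfolding filterlim_def by blast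
  also have "\<dots> \<le> Liminf G (\<lambda>x. f (h x))"
    by (rule Liminf_filtermap_le)
  finally show ?thesis .
qed

lemma eventually_asymp_filter_gt: "eventually (\<lambda>p. snd p > (c::real)) (nhds d \<times>\<^sub>F at_top)"
  using eventually_prodI[OF always_eventually[of "\<lambda>_. True"] eventually_gt_at_top[of c]] by simp

lemma asymp_fun_mono:
  assumes "\<And>x. f x \<le> g x"
  shows "asymp_fun f d \<le> asymp_fun g d"
  unfolding asymp_fun_def
  by (rule Liminf_mono, rule eventually_mono[OF eventually_asymp_filter_gt[of 0]]) (auto simp: assms)

lemma asymp_fun_le_of_ray:
  fixes f :: "'a::real_normed_vector \<Rightarrow> ereal"
  assumes ray: "\<And>s. s > 0 \<Longrightarrow> f (x0 + s *\<^sub>R d) \<le> ereal (l0 + s * \<mu>)"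
  shows "asymp_fun f d \<le> ereal \<mu>"
proof -
  let ?h = "\<lambda>t::real. (d + inverse t *\<^sub>R x0, t)"
  have "((\<lambda>t. d + inverse t *\<^sub>R x0) \<longlongrightarrow> d + 0 *\<^sub>R x0) at_top"
    by (intro tendsto_intros tendsto_inverse_0_at_top filterlim_ident)
  then have "filterlim ?h (nhds d \<times>\<^sub>F at_top) at_top"
    by (intro filterlim_Pair filterlim_ident) simp
  then have "asymp_fun f d \<le> Liminf at_top (\<lambda>t. f (t *\<^sub>R (d + inverse t *\<^sub>R x0)) / ereal t)"
    unfolding asymp_fun_def by (rule Liminf_le_Liminf_filterlim[THEN order_trans]) simp
  also have "\<dots> \<le> Liminf at_top (\<lambda>t. ereal (l0 / t + \<mu>))"
  proof (rule Liminf_mono)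
    show "eventually (\<lambda>t. f (t *\<^sub>R (d + inverse t *\<^sub>R x0)) / ereal t \<le> ereal (l0 / t + \<mu>)) at_top"
      using eventually_gt_at_top[of 0]
    proof eventually_elim
      case (elim t)
      have "f (t *\<^sub>R (d + inverse t *\<^sub>R x0)) = f (x0 + t *\<^sub>R d)"
        using elim by (simp add: algebra_simps)
      also have "\<dots> \<le> ereal (l0 + t * \<mu>)"
        using ray elim .
      finally have "f (t *\<^sub>R (d + inverse t *\<^sub>R x0)) / ereal t \<le> ereal (l0 + t * \<mu>) / ereal t"
        using elim by (intro ereal_divide_right_mono) auto
      also have "\<dots> = ereal (l0 / t + \<mu>)"
        using elim by (simp add: add_divide_distrib)
      finally show ?case .
    qed
  qed
  also have "\<dots> = ereal (0 + \<mu>)"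
    by (intro lim_imp_Liminf tendsto_intros tendsto_divide_0[OF tendsto_const]
        filterlim_at_top_imp_at_infinity filterlim_ident) simp
  finally show ?thesis
    by simp
qed

lemma asymp_fun_le_of_le_add:
  fixes f g :: "'a::real_normed_vector \<Rightarrow> ereal"
  assumes le: "\<And>x. g x \<le> f x + ereal M"
  shows "asymp_fun g d \<le> asymp_fun f d"
  unfolding asymp_fun_def
proof (rule ereal_le_epsilon2)
  fix e :: real
  assume e: "e > 0"
  let ?F = "nhds d \<times>\<^sub>F (at_top :: real filter)"
  have "eventually (\<lambda>(d', t). g (t *\<^sub>R d') / ereal t \<le> f (t *\<^sub>R d') / ereal t + ereal e) ?F"
    using eventually_asymp_filter_gt[of "\<bar>M\<bar> / e"]
  proof (rule eventually_mono, clarsimp)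
    fix d' and t :: real
    assume t: "\<bar>M\<bar> / e < t"
    then have Mt: "\<bar>M\<bar> < e * t"
      using e by (simp add: divide_less_eq mult.commute)
    then have "0 < e * t"
      using abs_ge_zero[of M] by linarith
    then have "t > 0"
      using e by (simp add: zero_less_mult_iff)
    have "M / t \<le> e"
      using Mt \<open>t > 0\<close> abs_ge_self[of M] by (simp add: divide_le_eq mult.commute)
    have "g (t *\<^sub>R d') / ereal t \<le> (f (t *\<^sub>R d') + ereal M) / ereal t"
      using le \<open>t > 0\<close> by (intro ereal_divide_right_mono) auto
    also have "\<dots> = f (t *\<^sub>R d') / ereal t + ereal (M / t)"
      using \<open>t > 0\<close> by (cases "f (t *\<^sub>R d')") (auto simp: add_divide_distrib)
    also have "\<dots> \<le> f (t *\<^sub>R d') / ereal t + ereal e"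
      using \<open>M / t \<le> e\<close> by (intro add_left_mono) simp
    finally show "g (t *\<^sub>R d') / ereal t \<le> f (t *\<^sub>R d') / ereal t + ereal e" .
  qed
  then have "Liminf ?F (\<lambda>(d', t). g (t *\<^sub>R d') / ereal t)
      \<le> Liminf ?F (\<lambda>p. (\<lambda>(d', t). f (t *\<^sub>R d') / ereal t) p + ereal e)"
    by (intro Liminf_mono) (simp add: case_prod_unfold)
  also have "\<dots> = Liminf ?F (\<lambda>(d', t). f (t *\<^sub>R d') / ereal t) + ereal e"
    by (rule Liminf_add_ereal_right) (simp_all add: prod_filter_eq_bot)
  finally show "Liminf ?F (\<lambda>(d', t). g (t *\<^sub>R d') / ereal t)
      \<le> Liminf ?F (\<lambda>(d', t). f (t *\<^sub>R d') / ereal t) + ereal e" .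
qed

lemma asymp_fun_add_bounded:
  fixes f :: "'a::real_normed_vector \<Rightarrow> ereal"
  assumes "\<And>x. \<bar>g x\<bar> \<le> M"
  shows "asymp_fun (\<lambda>x. f x + ereal (g x)) d = asymp_fun f d"
proof (rule antisym)
  show "asymp_fun (\<lambda>x. f x + ereal (g x)) d \<le> asymp_fun f d"
    using assms by (intro asymp_fun_le_of_le_add[of _ _ M] add_left_mono) (simp add: abs_le_iff)
  have "f x \<le> f x + ereal (g x) + ereal M" for x
    using assms[of x] by (cases "f x") (auto simp: abs_le_iff)
  then show "asymp_fun f d \<le> asymp_fun (\<lambda>x. f x + ereal (g x)) d"
    by (rule asymp_fun_le_of_le_add)
qed

lemma asymp_fun_lessE:
  assumes "asymp_fun f d < ereal \<mu>" "r > 0"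
  obtains d' t where "dist d' d < r" "t > T" "f (t *\<^sub>R d') < ereal (t * \<mu>)"
proof -
  let ?F = "nhds d \<times>\<^sub>F (at_top :: real filter)"
  let ?q = "\<lambda>p. f (snd p *\<^sub>R fst p) / ereal (snd p)"
  have "\<not> eventually (\<lambda>p. ereal \<mu> \<le> ?q p) ?F"
  proof
    assume "eventually (\<lambda>p. ereal \<mu> \<le> ?q p) ?F"
    then have "ereal \<mu> \<le> asymp_fun f d"
      unfolding asymp_fun_def case_prod_unfold by (rule Liminf_bounded)
    with assms(1) show False
      by simp
  qed
  then have "frequently (\<lambda>p. \<not> ereal \<mu> \<le> ?q p) ?F"
    by (simp add: not_eventually)
  moreover have "eventually (\<lambda>p. dist (fst p) d < r \<and> snd p > max T 0) ?F"
  proof -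
    have "eventually (\<lambda>d'. dist d' d < r) (nhds d)"
      using assms(2) eventually_nhds_metric by blast
    from eventually_prodI[OF this eventually_gt_at_top[of "max T 0"]] show ?thesis .
  qed
  ultimately obtain p where "dist (fst p) d < r" "snd p > max T 0" "\<not> ereal \<mu> \<le> ?q p"
    using frequently_eventually_conj frequently_ex by blast
  then show ?thesis
    using that[of "fst p" "snd p"] by (cases "f (snd p *\<^sub>R fst p)") (auto simp: field_simps)
qed

lemma lsc_fun_eventually_gt:
  assumes "lsc_fun f" "c < f y"
  shows "eventually (\<lambda>z. c < f z) (nhds y)"
proof -
  have "c < Liminf (at y) f"
    using assms less_le_trans unfolding lsc_fun_def by blast
  then show ?thesis
    using assms(2) less_LiminfD eventually_nhds_conv_at by metis
qed

lemma convex_fun_secant_le: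
  assumes "convex_fun f" "f x \<le> ereal a" "f y \<le> ereal b" "0 < s" "s \<le> t"
  shows "f (x + (s / t) *\<^sub>R (y - x)) \<le> ereal (a + s * (b - a) / t)"
proof -
  have "(1 - s / t) *\<^sub>R (x, a) + (s / t) *\<^sub>R (y, b) \<in> {(x, \<mu>). f x \<le> ereal \<mu>}"
    using assms unfolding convex_fun_def by (intro convexD) auto
  then show ?thesis
    by (simp add: algebra_simps diff_divide_distrib)
qed

lemma dist_secant_ray_le:
  fixes x0 d d' :: "'a::real_normed_vector"
  assumes "t \<noteq> 0"
  shows "dist (x0 + (s / t) *\<^sub>R (t *\<^sub>R d' - x0)) (x0 + s *\<^sub>R d) \<le> \<bar>s\<bar> * dist d' d + \<bar>s / t\<bar> * norm x0"
proof -
  have "dist (x0 + (s / t) *\<^sub>R (t *\<^sub>R d' - x0)) (x0 + s *\<^sub>R d) = norm (s *\<^sub>R (d' - d) - (s / t) *\<^sub>R x0)"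
    using assms by (simp add: dist_norm algebra_simps)
  also have "\<dots> \<le> norm (s *\<^sub>R (d' - d)) + norm ((s / t) *\<^sub>R x0)"
    by (rule norm_triangle_ineq4)
  finally show ?thesis
    by (simp add: dist_norm)
qed

text \<open>
  By lower semicontinuity \<open>f > l\<^sub>0 + s\<mu>\<close> on a ball around \<open>x\<^sub>0 + sd\<close>. A far point \<open>td'\<close>
  with \<open>d'\<close> close to \<open>d\<close> and \<open>f(td') < t\<mu>\<^sub>1 < t\<mu>\<close> exists by the definition of \<open>f\<^sub>\<infinity>\<close>; for large
  \<open>t\<close> the secant from \<open>x\<^sub>0\<close> to \<open>td'\<close> passes through that ball below \<open>l\<^sub>0 + s\<mu>\<close>.
\<close>
lemma convex_lsc_fun_ray_le:
  fixes f :: "'a::real_normed_vector \<Rightarrow> ereal"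
  assumes lsc: "lsc_fun f" and cvx: "convex_fun f" and x0: "f x0 \<le> ereal l0"
    and slope: "asymp_fun f d < ereal \<mu>" and s: "s > 0"
  shows "f (x0 + s *\<^sub>R d) \<le> ereal (l0 + s * \<mu>)"
proof (rule ccontr)
  assume "\<not> ?thesis"
  then have "eventually (\<lambda>z. ereal (l0 + s * \<mu>) < f z) (nhds (x0 + s *\<^sub>R d))"
    by (intro lsc_fun_eventually_gt[OF lsc]) simp
  then obtain r where r: "r > 0"
    and above: "\<And>z. dist z (x0 + s *\<^sub>R d) < r \<Longrightarrow> ereal (l0 + s * \<mu>) < f z"
    unfolding eventually_nhds_metric by blast
  obtain \<mu>1 where slope1: "asymp_fun f d < ereal \<mu>1" and "\<mu>1 < \<mu>"
    using ereal_dense2[OF slope] by auto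
  define T where "T = s + 2 * s * norm x0 / r + \<bar>l0\<bar> / (\<mu> - \<mu>1)"
  obtain d' t where d': "dist d' d < r / (2 * s)" and "t > T" and ft: "f (t *\<^sub>R d') < ereal (t * \<mu>1)"
    using asymp_fun_lessE[OF slope1, of "r / (2 * s)" T] r s by auto
  have "2 * s * norm x0 / r \<ge> 0" "\<bar>l0\<bar> / (\<mu> - \<mu>1) \<ge> 0"
    using r s \<open>\<mu>1 < \<mu>\<close> by auto
  then have "s < t" "2 * s * norm x0 / r < t" "\<bar>l0\<bar> / (\<mu> - \<mu>1) < t"
    using \<open>t > T\<close> s unfolding T_def by linarith+
  then have t: "s < t" "2 * s * norm x0 < t * r" "\<bar>l0\<bar> \<le> t * (\<mu> - \<mu>1)"
    using r \<open>\<mu>1 < \<mu>\<close> by (simp_all add: pos_divide_less_eq mult_ac)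
  have "t > 0"
    using s t(1) by linarith
  obtain m where fm: "f (t *\<^sub>R d') \<le> ereal m" and "m < t * \<mu>1"
    using ereal_dense2[OF ft] by (auto intro: less_imp_le)
  let ?z = "x0 + (s / t) *\<^sub>R (t *\<^sub>R d' - x0)"
  have below: "f ?z \<le> ereal (l0 + s * (m - l0) / t)"
    using convex_fun_secant_le[OF cvx x0 fm s] t(1) by simp
  have "s * dist d' d < r / 2"
    using d' s by (simp add: pos_less_divide_eq mult_ac)
  moreover have "s / t * norm x0 < r / 2"
    using t(2) \<open>t > 0\<close> by (simp add: pos_divide_less_eq mult_ac)
  moreover have "dist ?z (x0 + s *\<^sub>R d) \<le> s * dist d' d + s / t * norm x0"
    using dist_secant_ray_le[of t x0 s d' d] s \<open>t > 0\<close> by simp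
  ultimately have "dist ?z (x0 + s *\<^sub>R d) < r"
    by linarith
  then have "ereal (l0 + s * \<mu>) < ereal (l0 + s * (m - l0) / t)"
    using above below by (blast intro: less_le_trans)
  have "(m - l0) / t < \<mu>"
    using \<open>m < t * \<mu>1\<close> t(3) \<open>t > 0\<close> by (simp add: pos_divide_less_eq algebra_simps)
  then have "s * ((m - l0) / t) < s * \<mu>"
    using s by (rule mult_strict_left_mono)
  with \<open>ereal (l0 + s * \<mu>) < ereal (l0 + s * (m - l0) / t)\<close> show False
    by simp
qed

lemma ALS_add_bounded:
  fixes f :: "'a::real_normed_vector \<Rightarrow> ereal"
  assumes als: "ALS f" and bounded: "\<And>x. \<bar>g x\<bar> \<le> M"
    and retract: "\<And>x d \<rho>. \<rho> > 0 \<Longrightarrow> diverges_in_direction x d \<Longrightarrow>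
                    eventually (\<lambda>k. g (x k - \<rho> *\<^sub>R d) \<le> g (x k)) sequentially"
  shows "ALS (\<lambda>x. f x + ereal (g x))"
proof (rule ALSI)
  fix \<rho> :: real and \<tau> x d
  assume \<rho>: "\<rho> > 0" and \<tau>: "bounded (range \<tau>)" and lev: "\<And>k. f (x k) + ereal (g (x k)) \<le> ereal (\<tau> k)"
    and x: "diverges_in_direction x d" and ker: "asymp_fun (\<lambda>x. f x + ereal (g x)) d = 0"
  define \<tau>' where "\<tau>' k = \<tau> k - g (x k)" for k
  have "bounded (range \<tau>')"
  proof -
    obtain a where a: "\<And>k. \<bar>\<tau> k\<bar> \<le> a"
      using \<tau> unfolding bounded_real by blast
    have "\<bar>\<tau>' k\<bar> \<le> a + M" for k
      using a[of k] bounded[of "x k"] abs_triangle_ineq4[of "\<tau> k" "g (x k)"] unfolding \<tau>'_def by linarith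
    then show ?thesis
      unfolding bounded_real by blast
  qed
  moreover have "f (x k) \<le> ereal (\<tau>' k)" for k
    using lev[of k] unfolding \<tau>'_def by (cases "f (x k)") auto
  moreover have "asymp_fun f d = 0"
    using ker asymp_fun_add_bounded[of g M f d] bounded by simp
  ultimately have "eventually (\<lambda>k. f (x k - \<rho> *\<^sub>R d) \<le> ereal (\<tau>' k)) sequentially"
    using ALSD[OF als \<rho>] x by blast
  with retract[OF \<rho> x]
  show "eventually (\<lambda>k. f (x k - \<rho> *\<^sub>R d) + ereal (g (x k - \<rho> *\<^sub>R d)) \<le> ereal (\<tau> k)) sequentially"
  proof eventually_elim
    case (elim k)
    then show ?case
      unfolding \<tau>'_def by (cases "f (x k - \<rho> *\<^sub>R d)") auto
  qed
qed

lemma Phi0_mono: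
  assumes "\<And>i. lam $ i \<ge> 0" "\<And>i. u $ i \<noteq> 0 \<Longrightarrow> w $ i \<noteq> 0"
  shows "Phi0 lam u \<le> Phi0 lam w"
  unfolding Phi0_def using assms by (intro sum_mono mult_left_mono) auto

lemma Phiplus_mono:
  assumes "\<And>i. lam $ i \<ge> 0" "\<And>i. u $ i > 0 \<Longrightarrow> w $ i > 0"
  shows "Phiplus lam u \<le> Phiplus lam w"
  unfolding Phiplus_def using assms by (intro sum_mono mult_left_mono) auto

lemma abs_Phi0_le:
  assumes "\<And>i. lam $ i \<ge> 0"
  shows "\<bar>Phi0 lam u\<bar> \<le> sum (($) lam) UNIV"
  unfolding Phi0_def using assms by (subst abs_of_nonneg) (auto intro!: sum_nonneg sum_mono)

lemma abs_Phiplus_le: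
  assumes "\<And>i. lam $ i \<ge> 0"
  shows "\<bar>Phiplus lam u\<bar> \<le> sum (($) lam) UNIV"
  unfolding Phiplus_def using assms by (subst abs_of_nonneg) (auto intro!: sum_nonneg sum_mono)

lemma ALS_add_Phi:
  fixes f :: "real^'n \<Rightarrow> ereal" and B :: "real^'n^'r"
  assumes als: "ALS f" and lam: "\<And>i. lam $ i \<ge> 0" and Phi: "Phi = Phi0 lam \<or> Phi = Phiplus lam"
  shows "ALS (\<lambda>x. f x + ereal (Phi (B *v x - b)))"
proof (rule ALS_add_bounded[OF als])
  show "\<bar>Phi (B *v x - b)\<bar> \<le> sum (($) lam) UNIV" for x
    using Phi abs_Phi0_le[OF lam] abs_Phiplus_le[OF lam] by blast
  fix x :: "nat \<Rightarrow> real^'n" and d and \<rho> :: real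
  assume "\<rho> > 0" "diverges_in_direction x d"
  then have "eventually (\<lambda>k. \<forall>i. ((B *v (x k - \<rho> *\<^sub>R d) - b) $ i \<noteq> 0 \<longrightarrow> (B *v x k - b) $ i \<noteq> 0)
                                 \<and> ((B *v (x k - \<rho> *\<^sub>R d) - b) $ i > 0 \<longrightarrow> (B *v x k - b) $ i > 0)) sequentially"
    using diverges_in_direction_retract_sign[of "\<lambda>x. (B *v x) $ i" x d \<rho> "b $ i" for i]
    by (intro eventually_all_finite)
      (auto intro: bounded_linear_compose[OF bounded_linear_vec_nth matrix_vector_mul_bounded_linear])
  then show "eventually (\<lambda>k. Phi (B *v (x k - \<rho> *\<^sub>R d) - b) \<le> Phi (B *v x k - b)) sequentially"
    by eventually_elim (use Phi in \<open>auto intro: Phi0_mono[OF lam] Phiplus_mono[OF lam]\<close>)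
qed

lemma add_indicator_fun_le_iff: "f x + indicator_fun C x \<le> ereal c \<longleftrightarrow> x \<in> C \<and> f x \<le> ereal c"
  by (simp add: indicator_fun_def)

lemma asymp_fun_eq_0_of_add_indicator:
  assumes lsc: "lsc_fun f" and cvx: "convex_fun f" and x0: "f x0 < \<infinity>"
    and ray: "\<And>s. s > 0 \<Longrightarrow> x0 + s *\<^sub>R d \<in> C"
    and ker: "asymp_fun (\<lambda>x. f x + indicator_fun C x) d = 0"
  shows "asymp_fun f d = 0"
proof (rule antisym)
  have "asymp_fun f d \<le> asymp_fun (\<lambda>x. f x + indicator_fun C x) d"
    by (rule asymp_fun_mono) (simp add: indicator_fun_def)
  with ker show "asymp_fun f d \<le> 0"
    by simp
  show "asymp_fun f d \<ge> 0"
  proof (rule ccontr)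
    assume "\<not> asymp_fun f d \<ge> 0"
    then obtain \<mu> where slope: "asymp_fun f d < ereal \<mu>" and "\<mu> < 0"
      using ereal_dense2[of "asymp_fun f d" 0] by (force simp: zero_ereal_def)
    obtain l0 where "f x0 \<le> ereal l0"
      using x0 by (cases "f x0") auto
    then have "f (x0 + s *\<^sub>R d) + indicator_fun C (x0 + s *\<^sub>R d) \<le> ereal (l0 + s * \<mu>)" if "s > 0" for s
      using convex_lsc_fun_ray_le[OF lsc cvx _ slope that] ray[OF that] by (simp add: indicator_fun_def)
    then have "asymp_fun (\<lambda>x. f x + indicator_fun C x) d \<le> ereal \<mu>"
      by (rule asymp_fun_le_of_ray)
    with ker \<open>\<mu> < 0\<close> show False
      by simp
  qed
qed

lemma polyhedron_halfspacesE:
  assumes "polyhedron C"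
  obtains F where "finite F" "C = \<Inter> F" "\<And>h. h \<in> F \<Longrightarrow> \<exists>a \<beta>. h = {x. a \<bullet> x \<le> \<beta>}"
proof -
  obtain F where "finite F" "C = \<Inter> F" "\<forall>h\<in>F. \<exists>a b. a \<noteq> 0 \<and> h = {x. a \<bullet> x \<le> b}"
    using assms unfolding polyhedron_def by blast
  then show thesis
    by (intro that) blast+
qed

lemma polyhedron_recession:
  assumes C: "polyhedron C" and x: "\<And>k. x k \<in> C" "diverges_in_direction x d" and y: "y \<in> C" and s: "s \<ge> 0"
  shows "y + s *\<^sub>R d \<in> C"
proof -
  obtain F where F: "C = \<Inter> F" "\<And>h. h \<in> F \<Longrightarrow> \<exists>a \<beta>. h = {x. a \<bullet> x \<le> \<beta>}"
    using polyhedron_halfspacesE[OF C] by metis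
  show ?thesis
    unfolding F(1)
  proof
    fix h
    assume "h \<in> F"
    then obtain a \<beta> where h: "h = {z. a \<bullet> z \<le> \<beta>}" "h \<in> F"
      using F(2) by blast
    then have "C \<subseteq> {z. a \<bullet> z \<le> \<beta>}"
      unfolding F(1) by blast
    then have "a \<bullet> d \<le> 0" "a \<bullet> y \<le> \<beta>"
      using x y by (auto intro: diverges_in_direction_linear_le[OF bounded_linear_inner_right])
    then show "y + s *\<^sub>R d \<in> h"
      using s mult_nonneg_nonpos[of s "a \<bullet> d"] by (simp add: h inner_add_right)
  qed
qed

lemma halfspace_eventually_retract:
  assumes ax: "\<And>k. a \<bullet> x k \<le> \<beta>" and x: "diverges_in_direction x d"
  shows "eventually (\<lambda>k. a \<bullet> (x k - \<rho> *\<^sub>R d) \<le> \<beta>) sequentially"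
proof -
  have "a \<bullet> d \<le> 0"
    using x ax by (intro diverges_in_direction_linear_le[OF bounded_linear_inner_right])
  then consider "a \<bullet> d = 0" | "a \<bullet> d < 0"
    by linarith
  then show ?thesis
  proof cases
    case 1
    then show ?thesis
      using ax by (simp add: inner_diff_right)
  next
    case 2
    have "eventually (\<lambda>k. a \<bullet> x k < \<beta> + \<rho> * (a \<bullet> d)) sequentially"
      using filterlim_at_bot_dense[THEN iffD1,
          OF diverges_in_direction_linear_at_bot[OF bounded_linear_inner_right x 2]] by blast
    then show ?thesis
      by eventually_elim (simp add: inner_diff_right)
  qed
qed

lemma polyhedron_eventually_retract:
  assumes C: "polyhedron C" and x: "\<And>k. x k \<in> C" "diverges_in_direction x d"
  shows "eventually (\<lambda>k. x k - \<rho> *\<^sub>R d \<in> C) sequentially"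
proof -
  obtain F where F: "finite F" "C = \<Inter> F" "\<And>h. h \<in> F \<Longrightarrow> \<exists>a \<beta>. h = {x. a \<bullet> x \<le> \<beta>}"
    using polyhedron_halfspacesE[OF C] by metis
  have "eventually (\<lambda>k. x k - \<rho> *\<^sub>R d \<in> h) sequentially" if "h \<in> F" for h
  proof -
    obtain a \<beta> where h: "h = {z. a \<bullet> z \<le> \<beta>}"
      using F(3) \<open>h \<in> F\<close> by blast
    then have "a \<bullet> x k \<le> \<beta>" for k
      using x(1)[of k] F(2) \<open>h \<in> F\<close> by blast
    then show ?thesis
      using halfspace_eventually_retract[of a x \<beta> d \<rho>] x(2) by (simp add: h)
  qed
  then have "eventually (\<lambda>k. \<forall>h\<in>F. x k - \<rho> *\<^sub>R d \<in> h) sequentially"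
    by (intro eventually_ball_finite[OF F(1)]) simp
  then show ?thesis
    by eventually_elim (simp add: F(2))
qed

lemma ALS_add_indicator_polyhedron:
  assumes als: "ALS f" and lsc: "lsc_fun f" and cvx: "convex_fun f"
    and C: "polyhedron C" and dom: "dom_fun f \<inter> C \<noteq> {}"
  shows "ALS (\<lambda>x. f x + indicator_fun C x)"
proof (rule ALSI)
  fix \<rho> :: real and \<tau> x d
  assume \<rho>: "\<rho> > 0" and \<tau>: "bounded (range \<tau>)" and lev: "\<And>k. f (x k) + indicator_fun C (x k) \<le> ereal (\<tau> k)"
    and x: "diverges_in_direction x d" and ker: "asymp_fun (\<lambda>x. f x + indicator_fun C x) d = 0"
  have xC: "\<And>k. x k \<in> C" and fx: "\<And>k. f (x k) \<le> ereal (\<tau> k)"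
    using lev by (auto simp: add_indicator_fun_le_iff)
  obtain x0 where "x0 \<in> C" "f x0 < \<infinity>"
    using dom unfolding dom_fun_def by blast
  then have "asymp_fun f d = 0"
    using polyhedron_recession[OF C xC x] ker
    by (intro asymp_fun_eq_0_of_add_indicator[OF lsc cvx]) auto
  then have "eventually (\<lambda>k. f (x k - \<rho> *\<^sub>R d) \<le> ereal (\<tau> k)) sequentially"
    by (rule ALSD[OF als \<rho> \<tau> fx x])
  with polyhedron_eventually_retract[OF C xC x]
  show "eventually (\<lambda>k. f (x k - \<rho> *\<^sub>R d) + indicator_fun C (x k - \<rho> *\<^sub>R d) \<le> ereal (\<tau> k)) sequentially"
    by eventually_elim (simp add: add_indicator_fun_le_iff)
qed

theorem mainTheorem1:
  fixes L :: "real^'n \<Rightarrow> ereal"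
  assumes "proper_fun L" and "lsc_fun L"
  shows "(\<forall>(B :: real^'n^'r) (b :: real^'r) (lam :: real^'r) (Phi :: real^'r \<Rightarrow> real).
            (\<forall>i. lam $ i > 0) \<and> (Phi = Phi0 lam \<or> Phi = Phiplus lam) \<and> ALS L
            \<longrightarrow> ALS (\<lambda>x. L x + ereal (Phi (B *v x - b))))
       \<and> (\<forall>C :: (real^'n) set.
            convex_fun L \<and> ALS L \<and> polyhedron C \<and> dom_fun L \<inter> C \<noteq> {}
            \<longrightarrow> ALS (\<lambda>x. L x + indicator_fun C x))"
proof (intro conjI allI impI)
  fix B :: "real^'n^'r" and b lam :: "real^'r" and Phi :: "real^'r \<Rightarrow> real"
  assume "(\<forall>i. lam $ i > 0) \<and> (Phi = Phi0 lam \<or> Phi = Phiplus lam) \<and> ALS L"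
  then show "ALS (\<lambda>x. L x + ereal (Phi (B *v x - b)))"
    by (intro ALS_add_Phi) (auto intro: less_imp_le)
next
  fix C :: "(real^'n) set"
  assume "convex_fun L \<and> ALS L \<and> polyhedron C \<and> dom_fun L \<inter> C \<noteq> {}"
  then show "ALS (\<lambda>x. L x + indicator_fun C x)"
    using ALS_add_indicator_polyhedron \<open>lsc_fun L\<close> by blast
qed

end
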